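(* There is an absolute constant $c>0$ such that for every integer $d\ge2$ and every $d$-decomposable permutation $X=(x_1,\dots,x_n)$ of $[n]$ (viewed as an access sequence of length $n$), $\mathsf{F}^{1}(X)\le c\,\log d\cdot |X|$.
   Context: $\log(x)=\log_2(\max\{2,x\})$. For a permutation $\sigma=(\sigma(1),\dots,\sigma(n))$, an interval $[a,b]$ with $1\le a\le b\le n$ is a block if $\{\sigma(a),\dots,\sigma(b)\}=\{c,c+1,\dots,e\}$ for some integers $c\le e$. A block partition of $\sigma$ is a partition of the positions $[n]$ into consecutive blocks $[a_1,b_1],\dots,[a_j,b_j]$; $\sigma_i$ is the permutation order-isomorphic to $\sigma$ restricted to $[a_i,b_i]$, and the skeleton $\tilde\sigma$ is the permutation of $[j]$ order-isomorphic to $(\sigma(q_1),\dots,\sigma(q_j))$ for any $q_i\in[a_i,b_i]$; we write $\sigma=\tilde\sigma[\sigma_1,\dots,\sigma_j]$. A permutation is $d$-decomposable if it is $(1)$, or $\sigma=\tilde\sigma[\sigma_1,\dots,\sigma_{j}]$ for some block partition into $2\le j\le d$ blocks with each $\sigma_i$ $d$-decomposable. One-finger cost: for a static BST $T$ on $[n]$ with $d_T(a,b)$ the number of edges between $a$ and $b$, a single finger starting at some node $\ell_1$ moves to each $x_t$ in turn; cost $\sum_{t=1}^n(1+d_T(x_t,x_{t-1}))$ with $x_0=\ell_1$. $\mathsf{F}^1(X)$ is the minimum over $T$ and $\ell_1$. *)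

theory Defs
  imports Complex_Main "HOL-Library.Tree"
begin

definition logp :: "real \<Rightarrow> real" where
  "logp x = log 2 (max 2 x)"

definition is_perm :: "nat list \<Rightarrow> bool" where
  "is_perm xs \<longleftrightarrow> distinct xs \<and> set xs = {1..length xs}"

text \<open>Standardisation: the permutation of [k] order-isomorphic to a list of distinct numbers.\<close>
definition std :: "nat list \<Rightarrow> nat list" where
  "std xs = map (\<lambda>x. card {y \<in> set xs. y \<le> x}) xs"

definition is_value_interval :: "nat set \<Rightarrow> bool" where
  "is_value_interval A \<longleftrightarrow> (\<exists>c e. c \<le> e \<and> A = {c..e})"

text \<open>d-decomposable permutations: (1), or sigma = skeleton[sigma_1,...,sigma_j] for a block
  partition into 2 \<le> j \<le> d consecutive blocks (each block a nonempty run of positions whose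
  values form an interval), each sigma_i (pattern of the block) being d-decomposable.\<close>
inductive decomposable :: "nat \<Rightarrow> nat list \<Rightarrow> bool" for d :: nat where
  single: "decomposable d [1]"
| split: "\<lbrakk> concat bs = xs; 2 \<le> length bs; length bs \<le> d;
           \<forall>b\<in>set bs. b \<noteq> [] \<and> is_value_interval (set b) \<and> decomposable d (std b) \<rbrakk>
          \<Longrightarrow> decomposable d xs"

fun tedges :: "'a tree \<Rightarrow> ('a \<times> 'a) set" where
  "tedges Leaf = {}"
| "tedges (Node l x r) = tedges l \<union> tedges r
     \<union> (case l of Leaf \<Rightarrow> {} | Node _ y _ \<Rightarrow> {(x,y),(y,x)})
     \<union> (case r of Leaf \<Rightarrow> {} | Node _ y _ \<Rightarrow> {(x,y),(y,x)})"

definition tdist :: "'a tree \<Rightarrow> 'a \<Rightarrow> 'a \<Rightarrow> nat" where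
  "tdist t a b = (LEAST k. (a, b) \<in> tedges t ^^ k)"

definition finger_cost :: "nat tree \<Rightarrow> nat \<Rightarrow> nat list \<Rightarrow> nat" where
  "finger_cost t l xs = sum_list (map (\<lambda>(p, q). 1 + tdist t q p) (zip (l # xs) xs))"

definition F1 :: "nat list \<Rightarrow> nat" where
  "F1 xs = Inf {finger_cost t l xs | t l. bst t \<and> set_tree t = {1..length xs} \<and> l \<in> set_tree t}"

end

(*
  The finger is kept at the root of a static search tree T, so F1(X) is at most n plus the length
  of the closed walk in T from the root through x_1, ..., x_n. Following a decomposition of X into
  at most d blocks of consecutive values, we build T bottom-up so that every block b is served by a
  subtree whose closed tour from its root costs at most 2K(|b| - 1) edges, K = 24 + 6 ceil(log d).

  The subtrees are kept "framed": the root is the minimum and the maximum is the root or its right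
  child. Framed trees of sorted blocks can then be glued into a balanced tree of depth O(log d) by
  hanging smaller trees below minima and larger trees below maxima, and lifting the global minimum
  and maximum to the top makes the result framed again. Each block subtree survives the gluing up to
  moving a single node by distance 2, and all block roots end up within distance 3 + 2 ceil(log d)
  of the top. So the tour of the concatenation costs the block tours plus O(log d) per block, which
  the slack 2K per block pays for.
*)

theory Submission
  imports Defs "HOL-Library.Log_Nat"
begin

section \<open>Distances in a tree\<close>

fun root_val :: "'a tree \<Rightarrow> 'a" where
  "root_val (Node l x r) = x"

lemma root_val_in_set_tree: "t \<noteq> Leaf \<Longrightarrow> root_val t \<in> set_tree t"
  by (cases t) auto

lemma tedges_subset_Node: "tedges l \<subseteq> tedges (Node l x r)" "tedges r \<subseteq> tedges (Node l x r)"
  by auto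

lemma tedges_Node_child:
  "l \<noteq> Leaf \<Longrightarrow> (x, root_val l) \<in> tedges (Node l x r)"
  "r \<noteq> Leaf \<Longrightarrow> (x, root_val r) \<in> tedges (Node l x r)"
  by (cases l; simp) (cases r; simp)

lemma tedges_in_set_tree: "(u, v) \<in> tedges t \<Longrightarrow> u \<in> set_tree t \<and> v \<in> set_tree t"
proof (induction t)
  case (Node l x r)
  then show ?case
    by (cases l; cases r) auto
qed simp

lemma sym_tedges: "sym (tedges t)"
proof (rule symI)
  show "(u, v) \<in> tedges t \<Longrightarrow> (v, u) \<in> tedges t" for u v
  proof (induction t)
    case (Node l x r)
    then show ?case
      by (cases l; cases r) auto
  qed simp
qed

lemma relpow_sym: "sym R \<Longrightarrow> (a, b) \<in> R ^^ n \<Longrightarrow> (b, a) \<in> R ^^ n"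
proof (induction n arbitrary: b)
  case (Suc n)
  then obtain y where "(a, y) \<in> R ^^ n" "(y, b) \<in> R"
    by (auto elim: relpow_Suc_E)
  with Suc show ?case
    by (metis relpow_Suc_I2 symD)
qed simp

lemma relpow_image_le:
  assumes "\<forall>(u, v)\<in>E. (f u, f v) \<in> E' \<or> f u = f v" and "(a, b) \<in> E ^^ n"
  shows "\<exists>m\<le>n. (f a, f b) \<in> E' ^^ m"
  using assms(2)
proof (induction n arbitrary: b)
  case (Suc n)
  then obtain y where y: "(a, y) \<in> E ^^ n" "(y, b) \<in> E"
    by (auto elim: relpow_Suc_E)
  with Suc.IH obtain m where m: "m \<le> n" "(f a, f y) \<in> E' ^^ m"
    by blast
  have "(f y, f b) \<in> E' \<or> f y = f b"
    using assms(1) y(2) by blast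
  then show ?case
  proof
    assume "(f y, f b) \<in> E'"
    with m show ?case
      by (intro exI[of _ "Suc m"]) auto
  next
    assume "f y = f b"
    with m show ?case
      by (intro exI[of _ m]) auto
  qed
qed simp

lemma tdist_sym: "tdist t a b = tdist t b a"
proof -
  have "(\<lambda>k. (a, b) \<in> tedges t ^^ k) = (\<lambda>k. (b, a) \<in> tedges t ^^ k)"
    by (intro ext iffI; erule relpow_sym[OF sym_tedges])
  then show ?thesis
    by (simp add: tdist_def)
qed

lemma tdist_le: "(a, b) \<in> tedges t ^^ k \<Longrightarrow> tdist t a b \<le> k"
  unfolding tdist_def by (rule Least_le)

lemma tdist_self [simp]: "tdist t a a = 0"
  using tdist_le[OF relpow_0_I] by simp

lemma tdist_edge: "(a, b) \<in> tedges t \<Longrightarrow> tdist t a b \<le> 1"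
  by (rule tdist_le) simp

lemma tdist_Node_child:
  "l \<noteq> Leaf \<Longrightarrow> tdist (Node l x r) x (root_val l) \<le> 1"
  "r \<noteq> Leaf \<Longrightarrow> tdist (Node l x r) x (root_val r) \<le> 1"
  by (rule tdist_edge, erule tedges_Node_child)+

lemma tdist_two_edges: "(a, b) \<in> tedges t \<Longrightarrow> (b, c) \<in> tedges t \<Longrightarrow> tdist t a c \<le> 2"
  by (rule tdist_le) (auto simp: numeral_2_eq_2 relpow_Suc_I2)

lemma rtrancl_tedges_root: "a \<in> set_tree t \<Longrightarrow> (root_val t, a) \<in> (tedges t)\<^sup>*"
proof (induction t)
  case (Node l x r)
  consider "a = x" | "a \<in> set_tree l" | "a \<in> set_tree r"
    using Node.prems by auto
  then show ?case
  proof cases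
    case 2
    then have "(x, root_val l) \<in> tedges (Node l x r)"
      by (intro tedges_Node_child) auto
    moreover have "(root_val l, a) \<in> (tedges (Node l x r))\<^sup>*"
      using rtrancl_mono[OF tedges_subset_Node(1)] Node.IH(1)[OF 2] by (rule subsetD)
    ultimately show ?thesis
      unfolding root_val.simps by (rule converse_rtrancl_into_rtrancl)
  next
    case 3
    then have "(x, root_val r) \<in> tedges (Node l x r)"
      by (intro tedges_Node_child) auto
    moreover have "(root_val r, a) \<in> (tedges (Node l x r))\<^sup>*"
      using rtrancl_mono[OF tedges_subset_Node(2)] Node.IH(2)[OF 3] by (rule subsetD)
    ultimately show ?thesis
      unfolding root_val.simps by (rule converse_rtrancl_into_rtrancl)
  qed (simp del: tedges.simps)
qed simp

lemma relpow_tdist: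
  assumes "a \<in> set_tree t" "b \<in> set_tree t"
  shows "(a, b) \<in> tedges t ^^ tdist t a b"
proof -
  have "(a, root_val t) \<in> (tedges t)\<^sup>*"
    using sym_rtrancl[OF sym_tedges] rtrancl_tedges_root[OF assms(1)] by (rule symD)
  then have "(a, b) \<in> (tedges t)\<^sup>*"
    using rtrancl_tedges_root[OF assms(2)] by (rule rtrancl_trans)
  then obtain n where "(a, b) \<in> tedges t ^^ n"
    by (auto simp: rtrancl_power)
  then show ?thesis
    unfolding tdist_def by (rule LeastI)
qed

lemma tdist_triangle:
  assumes "a \<in> set_tree t" "b \<in> set_tree t" "c \<in> set_tree t"
  shows "tdist t a c \<le> tdist t a b + tdist t b c"
proof (rule tdist_le)
  show "(a, c) \<in> tedges t ^^ (tdist t a b + tdist t b c)"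
    unfolding relpow_add using relpow_tdist[OF assms(1,2)] relpow_tdist[OF assms(2,3)]
    by (rule relcompI)
qed

lemma tdist_image_le:
  assumes "\<forall>(u, v)\<in>tedges t. (f u, f v) \<in> tedges t' \<or> f u = f v"
    and "a \<in> set_tree t" "b \<in> set_tree t"
  shows "tdist t' (f a) (f b) \<le> tdist t a b"
proof -
  obtain m where "m \<le> tdist t a b" "(f a, f b) \<in> tedges t' ^^ m"
    using relpow_image_le[OF assms(1) relpow_tdist[OF assms(2,3)]] by blast
  then show ?thesis
    using tdist_le[of "f a" "f b" m t'] by linarith
qed

lemma tdist_mono:
  assumes "tedges t \<subseteq> tedges t'" "a \<in> set_tree t" "b \<in> set_tree t"
  shows "tdist t' a b \<le> tdist t a b"
proof -
  have "\<forall>(u, v)\<in>tedges t. (id u, id v) \<in> tedges t' \<or> id u = id v"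
    using assms(1) by auto
  from tdist_image_le[OF this assms(2,3)] show ?thesis
    by simp
qed

lemma tdist_via_subtree:
  assumes "tedges s \<subseteq> tedges T" "set_tree s \<subseteq> set_tree T" "r \<in> set_tree T"
    and "x \<in> set_tree s" "s \<noteq> Leaf" "tdist T r (root_val s) \<le> c"
  shows "tdist T r x \<le> c + tdist s (root_val s) x"
proof -
  have root: "root_val s \<in> set_tree s"
    by (rule root_val_in_set_tree[OF assms(5)])
  have "tdist T r x \<le> tdist T r (root_val s) + tdist T (root_val s) x"
    using assms(2-4) root by (intro tdist_triangle) auto
  also have "tdist T (root_val s) x \<le> tdist s (root_val s) x"
    by (rule tdist_mono[OF assms(1) root assms(4)])
  finally show ?thesis
    using assms(6) by linarith
qed

section \<open>Walks in a tree\<close>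

fun walk_cost :: "'a tree \<Rightarrow> 'a list \<Rightarrow> nat" where
  "walk_cost t (x # y # zs) = tdist t x y + walk_cost t (y # zs)"
| "walk_cost t _ = 0"

lemma walk_cost_append:
  "xs \<noteq> [] \<Longrightarrow> ys \<noteq> [] \<Longrightarrow>
   walk_cost t (xs @ ys) = walk_cost t xs + tdist t (last xs) (hd ys) + walk_cost t ys"
  by (induction t xs rule: walk_cost.induct) (auto simp: neq_Nil_conv)

lemma walk_cost_prefix_le: "walk_cost t xs \<le> walk_cost t (xs @ ys)"
  by (cases "xs = [] \<or> ys = []") (auto simp: walk_cost_append)

lemma finger_cost_eq_walk_cost: "finger_cost t l xs = length xs + walk_cost t (l # xs)"
  by (induction xs arbitrary: l) (auto simp: finger_cost_def tdist_sym)

lemma walk_cost_with_detour: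
  assumes "\<forall>x\<in>set zs. \<forall>y\<in>set zs. tdist t' x y \<le> tdist t x y + D * (of_bool (x = e) + of_bool (y = e))"
  shows "walk_cost t' zs + D * of_bool (zs \<noteq> [] \<and> hd zs = e) \<le> walk_cost t zs + 2 * D * count_list zs e"
  using assms
proof (induction t' zs rule: walk_cost.induct)
  case (1 t' x y zs)
  then have "tdist t' x y \<le> tdist t x y + D * (of_bool (x = e) + of_bool (y = e))"
    and "walk_cost t' (y # zs) + D * of_bool (y = e) \<le> walk_cost t (y # zs) + 2 * D * count_list (y # zs) e"
    by simp_all
  then show ?case
    by (cases "x = e"; cases "y = e") (simp_all add: algebra_simps)
qed auto

lemma walk_cost_concat_tours:
  assumes "\<forall>b\<in>set bs. b \<noteq> [] \<and> set b \<subseteq> set_tree t \<and> \<alpha> b \<in> set_tree t"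
    and "s \<in> set_tree t" "r \<in> set_tree t"
    and "\<forall>x\<in>{s, r} \<union> \<alpha> ` set bs. \<forall>y\<in>{s, r} \<union> \<alpha> ` set bs. tdist t x y \<le> B"
  shows "walk_cost t (s # concat bs @ [r])
           \<le> (\<Sum>b\<leftarrow>bs. walk_cost t (\<alpha> b # b @ [\<alpha> b])) + (length bs + 1) * B"
  using assms
proof (induction bs arbitrary: s)
  case (Cons b bs)
  define rest where "rest = concat bs @ [r]"
  have b: "b \<noteq> []" "hd b \<in> set_tree t" "last b \<in> set_tree t" "\<alpha> b \<in> set_tree t"
    using Cons.prems(1) by auto
  have "set rest \<subseteq> set_tree t"
    using Cons.prems(1,3) by (auto simp: rest_def)
  then have rest: "hd rest \<in> set_tree t"
    using hd_in_set[of rest] by (auto simp: rest_def)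
  have "walk_cost t (s # concat (b # bs) @ [r])
          = tdist t s (hd b) + walk_cost t b + tdist t (last b) (hd rest) + walk_cost t rest"
    using walk_cost_append[of "s # b" rest t] walk_cost_append[of "[s]" b t] b(1)
    by (simp add: rest_def)
  also have "\<dots> \<le> tdist t s (\<alpha> b) + walk_cost t (\<alpha> b # b @ [\<alpha> b]) + walk_cost t (\<alpha> b # rest)"
    using walk_cost_append[of "\<alpha> b # b" "[\<alpha> b]" t] walk_cost_append[of "[\<alpha> b]" b t]
      walk_cost_append[of "[\<alpha> b]" rest t]
      tdist_triangle[OF Cons.prems(2) b(4) b(2)] tdist_triangle[OF b(3) b(4) rest] b(1)
    by (simp add: rest_def)
  also have "walk_cost t (\<alpha> b # rest)
               \<le> (\<Sum>b\<leftarrow>bs. walk_cost t (\<alpha> b # b @ [\<alpha> b])) + (length bs + 1) * B"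
    unfolding rest_def using Cons.prems by (intro Cons.IH) auto
  also have "tdist t s (\<alpha> b) \<le> B"
    using Cons.prems(4) by simp
  finally show ?case
    by simp
qed simp

definition embeds_nearly :: "'a tree \<Rightarrow> 'a tree \<Rightarrow> bool" where
  "embeds_nearly t t' \<longleftrightarrow> (\<exists>e. \<forall>x\<in>set_tree t. \<forall>y\<in>set_tree t.
     tdist t' x y \<le> tdist t x y + 2 * (of_bool (x = e) + of_bool (y = e)))"

lemma embeds_nearly_if_tedges_subset: "tedges t \<subseteq> tedges t' \<Longrightarrow> embeds_nearly t t'"
  unfolding embeds_nearly_def by (metis tdist_mono trans_le_add1)

lemma embeds_nearly_if_displaced:
  assumes hom: "\<forall>(u, v)\<in>tedges t. (f u, f v) \<in> tedges t' \<or> f u = f v"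
    and fixed: "\<forall>x\<in>set_tree t. x \<noteq> e \<longrightarrow> f x = x"
    and "set_tree t \<subseteq> set_tree t'" "f e \<in> set_tree t'" "tdist t' e (f e) \<le> 2"
  shows "embeds_nearly t t'"
  unfolding embeds_nearly_def
proof (intro exI ballI)
  have near: "f x \<in> set_tree t' \<and> tdist t' x (f x) \<le> 2 * of_bool (x = e)" if "x \<in> set_tree t" for x
    using assms that by (cases "x = e") auto
  fix x y assume x: "x \<in> set_tree t" and y: "y \<in> set_tree t"
  have x': "x \<in> set_tree t'" "f x \<in> set_tree t'" and y': "y \<in> set_tree t'" "f y \<in> set_tree t'"
    using x y near assms(3) by auto
  have "tdist t' x y \<le> tdist t' x (f x) + tdist t' (f x) y"
    by (rule tdist_triangle[OF x'(1,2) y'(1)])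
  also have "tdist t' (f x) y \<le> tdist t' (f x) (f y) + tdist t' (f y) y"
    by (rule tdist_triangle[OF x'(2) y'(2,1)])
  also have "tdist t' (f x) (f y) \<le> tdist t x y"
    by (rule tdist_image_le[OF hom x y])
  finally show "tdist t' x y \<le> tdist t x y + 2 * (of_bool (x = e) + of_bool (y = e))"
    using near[OF x] near[OF y] by (simp add: tdist_sym[of t' "f y"])
qed

lemma count_list_le_1: "distinct xs \<Longrightarrow> count_list xs x \<le> 1"
  by (induction xs) (auto simp: count_list_0_iff)

lemma walk_cost_tour_embeds_nearly:
  assumes "embeds_nearly t t'" "distinct b" "set b \<subseteq> set_tree t" "a \<in> set_tree t"
  shows "walk_cost t' (a # b @ [a]) \<le> walk_cost t (a # b @ [a]) + 12"
proof -
  obtain e where e: "\<forall>x\<in>set_tree t. \<forall>y\<in>set_tree t.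
      tdist t' x y \<le> tdist t x y + 2 * (of_bool (x = e) + of_bool (y = e))"
    using assms(1) unfolding embeds_nearly_def by blast
  have "set (a # b @ [a]) \<subseteq> set_tree t"
    using assms(3,4) by auto
  with e have "\<forall>x\<in>set (a # b @ [a]). \<forall>y\<in>set (a # b @ [a]).
      tdist t' x y \<le> tdist t x y + 2 * (of_bool (x = e) + of_bool (y = e))"
    by blast
  from walk_cost_with_detour[OF this]
  have "walk_cost t' (a # b @ [a]) \<le> walk_cost t (a # b @ [a]) + 2 * 2 * count_list (a # b @ [a]) e"
    by linarith
  moreover have "count_list (a # b @ [a]) e \<le> 3"
    using count_list_le_1[OF assms(2), of e] by simp
  ultimately show ?thesis
    by linarith
qed

section \<open>Framed trees and balanced gluing\<close>

definition less_sets :: "'a::order set \<Rightarrow> 'a set \<Rightarrow> bool" where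
  "less_sets A B \<longleftrightarrow> (\<forall>x\<in>A. \<forall>y\<in>B. x < y)"

definition framed :: "'a tree \<Rightarrow> bool" where
  "framed t \<longleftrightarrow> (\<exists>m. t = \<langle>\<langle>\<rangle>, m, \<langle>\<rangle>\<rangle>) \<or> (\<exists>m M x. t = \<langle>\<langle>\<rangle>, m, \<langle>M, x, \<langle>\<rangle>\<rangle>\<rangle>)"

lemma framedE:
  assumes "framed t"
  obtains (single) m where "t = \<langle>\<langle>\<rangle>, m, \<langle>\<rangle>\<rangle>" | (double) m M x where "t = \<langle>\<langle>\<rangle>, m, \<langle>M, x, \<langle>\<rangle>\<rangle>\<rangle>"
  using assms unfolding framed_def by blast

lemma framed_not_Leaf: "framed t \<Longrightarrow> t \<noteq> Leaf"
  by (auto simp: framed_def)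

fun max_val :: "'a tree \<Rightarrow> 'a" where
  "max_val \<langle>\<langle>\<rangle>, m, \<langle>\<rangle>\<rangle> = m"
| "max_val \<langle>\<langle>\<rangle>, m, \<langle>M, x, \<langle>\<rangle>\<rangle>\<rangle> = x"

lemma framed_min_max:
  assumes "framed t" "bst t"
  shows "root_val t \<in> set_tree t" "max_val t \<in> set_tree t"
    "\<forall>x\<in>set_tree t. x \<noteq> root_val t \<longrightarrow> root_val t < x"
    "\<forall>x\<in>set_tree t. x \<noteq> max_val t \<longrightarrow> x < max_val t"
  using assms by (cases rule: framedE[OF assms(1), case_names single double]; auto)+

fun hang :: "'a tree \<Rightarrow> 'a tree \<Rightarrow> 'a tree \<Rightarrow> 'a tree" where
  "hang \<langle>\<langle>\<rangle>, m, \<langle>\<rangle>\<rangle> L R = \<langle>L, m, R\<rangle>"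
| "hang \<langle>\<langle>\<rangle>, m, \<langle>M, x, \<langle>\<rangle>\<rangle>\<rangle> L R = \<langle>L, m, \<langle>M, x, R\<rangle>\<rangle>"

context
  fixes t L R :: "'a::linorder tree"
  assumes framed: "framed t"
begin

lemma set_tree_hang: "set_tree (hang t L R) = set_tree L \<union> set_tree t \<union> set_tree R"
  by (cases rule: framedE[OF framed, case_names single double]) auto

lemma root_val_hang: "root_val (hang t L R) = root_val t"
  by (cases rule: framedE[OF framed, case_names single double]) auto

lemma bst_hang:
  "bst t \<Longrightarrow> bst L \<Longrightarrow> bst R \<Longrightarrow> less_sets (set_tree L) (set_tree t) \<Longrightarrow>
   less_sets (set_tree t) (set_tree R) \<Longrightarrow> bst (hang t L R)"
  by (cases rule: framedE[OF framed, case_names single double]) (auto simp: less_sets_def)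

lemma tedges_hang: "tedges t \<union> tedges L \<union> tedges R \<subseteq> tedges (hang t L R)"
proof (cases rule: framedE[OF framed, case_names single double])
  case (double m M x)
  have "tedges \<langle>M, x, \<langle>\<rangle>\<rangle> \<union> tedges R \<subseteq> tedges \<langle>M, x, R\<rangle>"
    by (cases M) auto
  then show ?thesis
    using double by auto
qed auto

lemma tdist_hang_left:
  assumes "L \<noteq> Leaf"
  shows "tdist (hang t L R) (root_val t) (root_val L) \<le> 2"
proof (cases rule: framedE[OF framed, case_names single double])
  case (single m)
  then show ?thesis
    using tdist_Node_child(1)[OF assms, of m R] by simp
next
  case (double m M x)
  then show ?thesis
    using tdist_Node_child(1)[OF assms, of m "\<langle>M, x, R\<rangle>"] by simp
qed

lemma tdist_hang_right:
  assumes "R \<noteq> Leaf"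
  shows "tdist (hang t L R) (root_val t) (root_val R) \<le> 2"
proof (cases rule: framedE[OF framed, case_names single double])
  case (single m)
  then show ?thesis
    using tdist_Node_child(2)[OF assms, of L m] by simp
next
  case (double m M x)
  have "(x, root_val R) \<in> tedges \<langle>L, m, \<langle>M, x, R\<rangle>\<rangle>"
    using tedges_subset_Node(2) tedges_Node_child(2)[OF assms] by (rule subsetD)
  moreover have "(m, x) \<in> tedges \<langle>L, m, \<langle>M, x, R\<rangle>\<rangle>"
    using tedges_Node_child(2)[of "\<langle>M, x, R\<rangle>" m L] by simp
  ultimately have "tdist \<langle>L, m, \<langle>M, x, R\<rangle>\<rangle> m (root_val R) \<le> 2"
    by (rule tdist_two_edges[rotated])
  with double show ?thesis
    by simp
qed

lemma tdist_hang_subtree: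
  assumes "S \<in> {L, R}" "x \<in> set_tree S"
  shows "tdist (hang t L R) (root_val t) x \<le> 2 + tdist S (root_val S) x"
proof (rule tdist_via_subtree[OF _ _ _ assms(2)])
  show "S \<noteq> Leaf"
    using assms(2) by auto
  then show "tdist (hang t L R) (root_val t) (root_val S) \<le> 2"
    using assms(1) tdist_hang_left tdist_hang_right by blast
  show "root_val t \<in> set_tree (hang t L R)"
    using root_val_in_set_tree[OF framed_not_Leaf[OF framed]] by (simp add: set_tree_hang)
  show "tedges S \<subseteq> tedges (hang t L R)" "set_tree S \<subseteq> set_tree (hang t L R)"
    using assms(1) tedges_hang by (auto simp: set_tree_hang)
qed

end

function glue :: "'a::linorder tree list \<Rightarrow> 'a tree" where
  "glue ts = (if ts = [] then Leaf else
     hang (ts ! (length ts div 2)) (glue (take (length ts div 2) ts))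
       (glue (drop (Suc (length ts div 2)) ts)))"
  by pat_completeness auto
termination
  by (relation "measure length") auto

declare glue.simps [simp del]

lemma glue_split:
  assumes "ts \<noteq> []"
  defines "k \<equiv> length ts div 2"
  shows "glue ts = hang (ts ! k) (glue (take k ts)) (glue (drop (Suc k) ts))"
    and "ts = take k ts @ ts ! k # drop (Suc k) ts"
    and "2 * length (take k ts) \<le> length ts" "2 * length (drop (Suc k) ts) \<le> length ts"
  using assms by (simp_all add: glue.simps[of ts] id_take_nth_drop)

lemma set_tree_glue: "\<forall>t\<in>set ts. framed t \<Longrightarrow> set_tree (glue ts) = (\<Union>t\<in>set ts. set_tree t)"
proof (induction ts rule: glue.induct)
  case (1 ts)
  show ?case
  proof (cases "ts = []")
    case False
    note split = glue_split[OF False]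
    have "set ts = set (take (length ts div 2) ts) \<union> {ts ! (length ts div 2)} \<union> set (drop (Suc (length ts div 2)) ts)"
      by (subst split(2)) auto
    with 1 False show ?thesis
      unfolding split(1) by (subst set_tree_hang) auto
  qed (simp add: glue.simps)
qed

lemma bst_glue:
  "\<forall>t\<in>set ts. framed t \<and> bst t \<Longrightarrow> sorted_wrt less_sets (map set_tree ts) \<Longrightarrow> bst (glue ts)"
proof (induction ts rule: glue.induct)
  case (1 ts)
  show ?case
  proof (cases "ts = []")
    case False
    define k where "k = length ts div 2"
    define A where "A = take k ts"
    define B where "B = drop (Suc k) ts"
    note split = glue_split[OF False, folded k_def, folded A_def B_def]
    have sorted: "sorted_wrt less_sets (map set_tree A)" "sorted_wrt less_sets (map set_tree B)"
      and less: "\<forall>s\<in>set A. less_sets (set_tree s) (set_tree (ts ! k))"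
        "\<forall>s\<in>set B. less_sets (set_tree (ts ! k)) (set_tree s)"
      using "1.prems"(2) by (subst (asm) split(2); simp add: sorted_wrt_append)+
    have trees: "\<forall>t\<in>set A. framed t \<and> bst t" "\<forall>t\<in>set B. framed t \<and> bst t"
      "framed (ts ! k) \<and> bst (ts ! k)"
      using "1.prems"(1) by (subst (asm) split(2); simp)+
    have "bst (glue A)" "bst (glue B)"
      using "1.IH" False trees sorted unfolding A_def B_def k_def by blast+
    moreover have "less_sets (set_tree (glue A)) (set_tree (ts ! k))"
      "less_sets (set_tree (ts ! k)) (set_tree (glue B))"
      using less trees by (auto simp: set_tree_glue less_sets_def)
    ultimately show ?thesis
      unfolding split(1) using trees(3) by (intro bst_hang) auto
  qed (simp add: glue.simps)
qed

lemma tedges_glue: "\<forall>t\<in>set ts. framed t \<Longrightarrow> t \<in> set ts \<Longrightarrow> tedges t \<subseteq> tedges (glue ts)"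
proof (induction ts rule: glue.induct)
  case (1 ts)
  define k where "k = length ts div 2"
  have ne: "ts \<noteq> []"
    using "1.prems"(2) by auto
  note split = glue_split[OF ne, folded k_def]
  have framed: "framed (ts ! k)" "\<forall>t\<in>set (take k ts). framed t" "\<forall>t\<in>set (drop (Suc k) ts). framed t"
    using "1.prems"(1) by (subst (asm) split(2); simp)+
  consider "t = ts ! k" | "t \<in> set (take k ts)" | "t \<in> set (drop (Suc k) ts)"
    using "1.prems"(2) by (subst (asm) split(2)) auto
  then show ?case
    using "1.IH"[OF ne] framed tedges_hang[OF framed(1)] unfolding split(1) k_def by cases blast+
qed

lemma root_val_in_set_tree_glue:
  assumes "\<forall>t\<in>set ts. framed t" "t \<in> set ts"
  shows "root_val t \<in> set_tree (glue ts)"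
proof -
  have "root_val t \<in> set_tree t"
    using assms root_val_in_set_tree[OF framed_not_Leaf] by blast
  with assms show ?thesis
    unfolding set_tree_glue[OF assms(1)] by blast
qed

lemma half_le_power:
  fixes m n H :: nat
  assumes "2 * m \<le> n" "n \<le> 2 ^ H" "0 < m"
  shows "1 \<le> H" "m \<le> 2 ^ (H - 1)"
proof -
  have "2 * m \<le> 2 ^ H" "2 \<le> (2::nat) ^ H"
    using assms by linarith+
  then obtain k where "H = Suc k"
    by (cases H) auto
  with \<open>2 * m \<le> 2 ^ H\<close> show "1 \<le> H" "m \<le> 2 ^ (H - 1)"
    by auto
qed

lemma tdist_glue_root:
  "\<forall>t\<in>set ts. framed t \<Longrightarrow> length ts \<le> 2 ^ H \<Longrightarrow> t \<in> set ts \<Longrightarrow>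
   tdist (glue ts) (root_val (glue ts)) (root_val t) \<le> 2 * H"
proof (induction ts arbitrary: H rule: glue.induct)
  case (1 ts)
  define k where "k = length ts div 2"
  define A where "A = take k ts"
  define B where "B = drop (Suc k) ts"
  define p where "p = ts ! k"
  have ne: "ts \<noteq> []"
    using "1.prems"(3) by auto
  note split = glue_split[OF ne, folded k_def, folded A_def B_def p_def]
  have framed: "framed p" "\<forall>t\<in>set A. framed t" "\<forall>t\<in>set B. framed t"
    using "1.prems"(1) by (subst (asm) split(2); simp)+
  have root: "root_val (glue ts) = root_val p"
    unfolding split(1) by (rule root_val_hang[OF framed(1)])
  consider "t = p" | "t \<in> set A" | "t \<in> set B"
    using "1.prems"(3) by (subst (asm) split(2)) auto
  then show ?case
  proof cases
    case 2
    then have "0 < length A"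
      by (rule length_pos_if_in_set)
    with half_le_power[OF split(3) "1.prems"(2)] have H: "1 \<le> H" "length A \<le> 2 ^ (H - 1)"
      by simp_all
    with \<open>t \<in> set A\<close> framed(2) have "tdist (glue A) (root_val (glue A)) (root_val t) \<le> 2 * (H - 1)"
      by (intro "1.IH"(1)[OF ne, folded k_def A_def])
    moreover have "tdist (glue ts) (root_val p) (root_val t)
        \<le> 2 + tdist (glue A) (root_val (glue A)) (root_val t)"
      unfolding split(1) using root_val_in_set_tree_glue[OF framed(2) 2]
      by (intro tdist_hang_subtree[OF framed(1)]) auto
    ultimately show ?thesis
      unfolding root using H(1) by linarith
  next
    case 3
    then have "0 < length B"
      by (rule length_pos_if_in_set)
    with half_le_power[OF split(4) "1.prems"(2)] have H: "1 \<le> H" "length B \<le> 2 ^ (H - 1)"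
      by simp_all
    with \<open>t \<in> set B\<close> framed(3) have "tdist (glue B) (root_val (glue B)) (root_val t) \<le> 2 * (H - 1)"
      by (intro "1.IH"(2)[OF ne, folded k_def B_def])
    moreover have "tdist (glue ts) (root_val p) (root_val t)
        \<le> 2 + tdist (glue B) (root_val (glue B)) (root_val t)"
      unfolding split(1) using root_val_in_set_tree_glue[OF framed(3) 3]
      by (intro tdist_hang_subtree[OF framed(1)]) auto
    ultimately show ?thesis
      unfolding root using H(1) by linarith
  qed (simp add: root)
qed

fun without_min :: "'a tree \<Rightarrow> 'a tree \<Rightarrow> 'a tree" where
  "without_min \<langle>\<langle>\<rangle>, m, \<langle>\<rangle>\<rangle> Y = Y"
| "without_min \<langle>\<langle>\<rangle>, m, \<langle>M, x, \<langle>\<rangle>\<rangle>\<rangle> Y = \<langle>M, x, Y\<rangle>"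

fun without_max :: "'a tree \<Rightarrow> 'a tree \<Rightarrow> 'a tree" where
  "without_max \<langle>\<langle>\<rangle>, m, \<langle>\<rangle>\<rangle> G = G"
| "without_max \<langle>\<langle>\<rangle>, m, \<langle>M, x, \<langle>\<rangle>\<rangle>\<rangle> G = \<langle>G, m, M\<rangle>"

context
  fixes t :: "'a::linorder tree"
  assumes framed: "framed t" and bst: "bst t"
begin

lemma without_min_props:
  assumes "bst Y" "less_sets (set_tree t) (set_tree Y)"
  shows "bst (without_min t Y)"
    and "set_tree (without_min t Y) = (set_tree t - {root_val t}) \<union> set_tree Y"
    and "tedges Y \<subseteq> tedges (without_min t Y)"
    and "Y \<noteq> Leaf \<Longrightarrow> without_min t Y \<noteq> Leaf \<and>
           tdist (without_min t Y) (root_val (without_min t Y)) (root_val Y) \<le> 1"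
  using assms bst tdist_Node_child(2)
  by (cases rule: framedE[OF framed, case_names single double]; fastforce simp: less_sets_def)+

lemma without_max_props:
  assumes "bst G" "less_sets (set_tree G) (set_tree t)"
  shows "bst (without_max t G)"
    and "set_tree (without_max t G) = set_tree G \<union> (set_tree t - {max_val t})"
    and "tedges G \<subseteq> tedges (without_max t G)"
    and "G \<noteq> Leaf \<Longrightarrow> without_max t G \<noteq> Leaf \<and>
           tdist (without_max t G) (root_val (without_max t G)) (root_val G) \<le> 1"
    and "max_val t = root_val t \<or> without_max t G \<noteq> Leaf \<and> root_val (without_max t G) = root_val t"
  using assms bst tdist_Node_child(1)
  by (cases rule: framedE[OF framed, case_names single double]; fastforce simp: less_sets_def)+

lemma tedges_without_min:
  fixes Y :: "'a tree"
  assumes "set_tree t \<noteq> {root_val t}"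
  defines "f \<equiv> \<lambda>u. if u = root_val t then root_val (without_min t Y) else u"
  shows "without_min t Y \<noteq> Leaf \<and>
    (\<forall>(u, v)\<in>tedges t. (f u, f v) \<in> tedges (without_min t Y) \<or> f u = f v)"
proof (cases rule: framedE[OF framed, case_names single double])
  case (double m M x)
  have "m \<notin> set_tree \<langle>M, x, \<langle>\<rangle>\<rangle>"
    using bst double by auto
  then have "u \<noteq> m \<and> v \<noteq> m" if "(u, v) \<in> tedges \<langle>M, x, \<langle>\<rangle>\<rangle>" for u v
    using tedges_in_set_tree[OF that] by auto
  moreover have "tedges \<langle>M, x, \<langle>\<rangle>\<rangle> \<subseteq> tedges \<langle>M, x, Y\<rangle>"
    by (cases M) auto
  moreover have "tedges t = tedges \<langle>M, x, \<langle>\<rangle>\<rangle> \<union> {(m, x), (x, m)}"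
    using double by simp
  ultimately show ?thesis
    using double by (auto simp: f_def simp del: tedges.simps)
qed (use assms(1) in auto)

lemma tedges_without_max:
  fixes G :: "'a tree"
  defines "f \<equiv> \<lambda>u. if u = max_val t then root_val t else u"
  shows "\<forall>(u, v)\<in>tedges t. (f u, f v) \<in> tedges (without_max t G) \<or> f u = f v"
proof (cases rule: framedE[OF framed, case_names single double])
  case (double m M x)
  have "x \<notin> set_tree M" "m \<noteq> x"
    using bst double by auto
  then have in_M: "u \<noteq> x \<and> v \<noteq> x" if "(u, v) \<in> tedges M" for u v
    using tedges_in_set_tree[OF that] by auto
  have child: "root_val M \<noteq> x \<and> (m, root_val M) \<in> tedges \<langle>G, m, M\<rangle> \<and> (root_val M, m) \<in> tedges \<langle>G, m, M\<rangle>"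
    if "M \<noteq> Leaf"
    using that \<open>x \<notin> set_tree M\<close> root_val_in_set_tree[OF that] by (cases M) auto
  have "(f u, f v) \<in> tedges \<langle>G, m, M\<rangle> \<or> f u = f v" if "(u, v) \<in> tedges t" for u v
  proof -
    have "(u, v) \<in> tedges M \<or> M \<noteq> Leaf \<and> (u, v) \<in> {(x, root_val M), (root_val M, x)} \<or>
        (u, v) \<in> {(m, x), (x, m)}"
      using that double by (cases M) auto
    then show ?thesis
      using in_M child tedges_subset_Node(2)[of M G m] double \<open>m \<noteq> x\<close>
      by (auto simp: f_def simp del: tedges.simps)
  qed
  with double show ?thesis
    by (auto simp del: tedges.simps)
qed simp

end

locale sorted_framed_trees =
  fixes low high :: "'a::linorder tree" and mids :: "'a tree list"
  assumes framed_bst: "\<forall>t\<in>set (low # mids @ [high]). framed t \<and> bst t"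
    and sorted: "sorted_wrt less_sets (map set_tree (low # mids @ [high]))"
begin

definition glued :: "'a tree" where
  "glued = glue mids"

definition upper :: "'a tree" where
  "upper = without_max high glued"

definition inner :: "'a tree" where
  "inner = without_min low upper"

definition frame :: "'a tree" where
  "frame = \<langle>\<langle>\<rangle>, root_val low, \<langle>inner, max_val high, \<langle>\<rangle>\<rangle>\<rangle>"

lemma framed_bst_low_high: "framed low" "bst low" "framed high" "bst high"
  using framed_bst by auto

lemma less_sets_mids:
  "\<forall>s\<in>set mids. less_sets (set_tree low) (set_tree s) \<and> less_sets (set_tree s) (set_tree high)"
  "less_sets (set_tree low) (set_tree high)"
  using sorted by (simp_all add: sorted_wrt_append)

lemma glued_props:
  "bst glued" "set_tree glued = (\<Union>t\<in>set mids. set_tree t)"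
  using framed_bst sorted by (simp_all add: glued_def bst_glue set_tree_glue sorted_wrt_append)

lemma less_sets_glued_high: "less_sets (set_tree glued) (set_tree high)"
  using less_sets_mids(1) glued_props(2) by (auto simp: less_sets_def)

lemma upper_props:
  "bst upper" "set_tree upper = set_tree glued \<union> (set_tree high - {max_val high})"
  "tedges glued \<subseteq> tedges upper"
  unfolding upper_def using without_max_props framed_bst_low_high glued_props(1) less_sets_glued_high
  by blast+

lemma less_sets_low_upper: "less_sets (set_tree low) (set_tree upper)"
  using less_sets_mids glued_props(2) upper_props(2) by (auto simp: less_sets_def)

lemma inner_props:
  "bst inner" "set_tree inner = (set_tree low - {root_val low}) \<union> set_tree upper"
  "tedges upper \<subseteq> tedges inner"
  unfolding inner_def using without_min_props framed_bst_low_high upper_props(1) less_sets_low_upper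
  by blast+

lemma set_tree_frame:
  "set_tree frame = (\<Union>t\<in>set (low # mids @ [high]). set_tree t)"
  using framed_min_max(1,2)[OF framed_bst_low_high(1,2)] framed_min_max(1,2)[OF framed_bst_low_high(3,4)]
  by (auto simp: frame_def inner_props(2) upper_props(2) glued_props(2))

lemma frame_props: "bst frame" "framed frame" "root_val frame = root_val low"
proof -
  note min = framed_min_max[OF framed_bst_low_high(1,2)] and max = framed_min_max[OF framed_bst_low_high(3,4)]
  have "\<forall>x\<in>set_tree inner. root_val low < x \<and> x < max_val high"
    using less_sets_mids min max
    by (auto simp: inner_props(2) upper_props(2) glued_props(2) less_sets_def)
  moreover have "root_val low < max_val high"
    using less_sets_mids(2) min(1) max(2) by (auto simp: less_sets_def)
  ultimately show "bst frame"
    using inner_props(1) by (auto simp: frame_def)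
  show "framed frame" "root_val frame = root_val low"
    by (auto simp: frame_def framed_def)
qed


lemma frame_subtrees:
  "tedges glued \<subseteq> tedges upper" "tedges upper \<subseteq> tedges inner" "tedges inner \<subseteq> tedges frame"
  "set_tree glued \<subseteq> set_tree upper" "set_tree upper \<subseteq> set_tree inner"
  "set_tree inner \<subseteq> set_tree frame" "root_val low \<in> set_tree frame" "max_val high \<in> set_tree frame"
  using upper_props inner_props by (auto simp: frame_def)

lemma tdist_frame_spine:
  "tdist frame (root_val low) (max_val high) \<le> 1"
  "inner \<noteq> Leaf \<Longrightarrow> tdist frame (max_val high) (root_val inner) \<le> 1"
  "upper \<noteq> Leaf \<Longrightarrow> inner \<noteq> Leaf \<and> tdist frame (root_val inner) (root_val upper) \<le> 1"
  "glued \<noteq> Leaf \<Longrightarrow> upper \<noteq> Leaf \<and> tdist frame (root_val upper) (root_val glued) \<le> 1"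
proof -
  show "tdist frame (root_val low) (max_val high) \<le> 1"
    using tdist_Node_child(2)[of "\<langle>inner, max_val high, \<langle>\<rangle>\<rangle>"] by (simp add: frame_def)
  show "inner \<noteq> Leaf \<Longrightarrow> tdist frame (max_val high) (root_val inner) \<le> 1"
    using tedges_Node_child(1) frame_subtrees(3) tdist_edge unfolding frame_def
    by (metis subsetD tedges_subset_Node(2))
  have inner: "upper \<noteq> Leaf \<Longrightarrow> inner \<noteq> Leaf \<and> tdist inner (root_val inner) (root_val upper) \<le> 1"
    unfolding inner_def
    by (rule without_min_props(4)[OF framed_bst_low_high(1,2) upper_props(1) less_sets_low_upper])
  have upper: "glued \<noteq> Leaf \<Longrightarrow> upper \<noteq> Leaf \<and> tdist upper (root_val upper) (root_val glued) \<le> 1"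
    unfolding upper_def
    by (rule without_max_props(4)[OF framed_bst_low_high(3,4) glued_props(1) less_sets_glued_high])
  show "upper \<noteq> Leaf \<Longrightarrow> inner \<noteq> Leaf \<and> tdist frame (root_val inner) (root_val upper) \<le> 1"
  proof -
    assume "upper \<noteq> Leaf"
    with inner have "inner \<noteq> Leaf" "tdist inner (root_val inner) (root_val upper) \<le> 1"
      by auto
    moreover have "tdist frame (root_val inner) (root_val upper) \<le> tdist inner (root_val inner) (root_val upper)"
      using frame_subtrees(3,5) root_val_in_set_tree \<open>upper \<noteq> Leaf\<close> \<open>inner \<noteq> Leaf\<close>
      by (intro tdist_mono) auto
    ultimately show ?thesis
      by simp
  qed
  show "glued \<noteq> Leaf \<Longrightarrow> upper \<noteq> Leaf \<and> tdist frame (root_val upper) (root_val glued) \<le> 1"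
  proof -
    assume "glued \<noteq> Leaf"
    with upper have "upper \<noteq> Leaf" "tdist upper (root_val upper) (root_val glued) \<le> 1"
      by auto
    moreover have "tdist frame (root_val upper) (root_val glued) \<le> tdist upper (root_val upper) (root_val glued)"
      using frame_subtrees(2,3,4) root_val_in_set_tree \<open>upper \<noteq> Leaf\<close> \<open>glued \<noteq> Leaf\<close>
      by (intro tdist_mono) auto
    ultimately show ?thesis
      by simp
  qed
qed

lemma tdist_frame_top:
  "inner \<noteq> Leaf \<Longrightarrow> root_val inner \<in> set_tree frame \<and> tdist frame (max_val high) (root_val inner) \<le> 1"
  "upper \<noteq> Leaf \<Longrightarrow> root_val upper \<in> set_tree frame \<and> tdist frame (max_val high) (root_val upper) \<le> 2"
  "glued \<noteq> Leaf \<Longrightarrow> root_val glued \<in> set_tree frame \<and> tdist frame (max_val high) (root_val glued) \<le> 3"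
proof -
  note top = frame_subtrees(8)
  show inner: "inner \<noteq> Leaf \<Longrightarrow> root_val inner \<in> set_tree frame \<and> tdist frame (max_val high) (root_val inner) \<le> 1"
    using tdist_frame_spine(2) frame_subtrees(6) root_val_in_set_tree by blast
  show upper: "root_val upper \<in> set_tree frame \<and> tdist frame (max_val high) (root_val upper) \<le> 2"
    if "upper \<noteq> Leaf"
  proof -
    have "root_val upper \<in> set_tree frame"
      using that frame_subtrees(5,6) root_val_in_set_tree by blast
    with tdist_frame_spine(3)[OF that] inner tdist_triangle[OF top, of "root_val inner" "root_val upper"]
    show ?thesis
      by auto
  qed
  show "root_val glued \<in> set_tree frame \<and> tdist frame (max_val high) (root_val glued) \<le> 3"
    if "glued \<noteq> Leaf"
  proof -
    have "root_val glued \<in> set_tree frame"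
      using that frame_subtrees(4-6) root_val_in_set_tree by blast
    with tdist_frame_spine(4)[OF that] upper tdist_triangle[OF top, of "root_val upper" "root_val glued"]
    show ?thesis
      by auto
  qed
qed

lemma tdist_frame_top_high: "root_val high \<in> set_tree frame \<and> tdist frame (max_val high) (root_val high) \<le> 2"
  using without_max_props(5)[OF framed_bst_low_high(3,4) glued_props(1) less_sets_glued_high]
    frame_subtrees(8) tdist_frame_top(2) by (auto simp: upper_def)

lemma tdist_frame_top_root:
  assumes "length mids \<le> 2 ^ H" "t \<in> set (low # mids @ [high])"
  shows "root_val t \<in> set_tree frame \<and> tdist frame (max_val high) (root_val t) \<le> 3 + 2 * H"
proof -
  consider "t = low" | "t \<in> set mids" | "t = high"
    using assms(2) by auto
  then show ?thesis
  proof cases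
    case 1
    then show ?thesis
      using frame_subtrees(7) tdist_frame_spine(1) tdist_sym[of frame "root_val low"] by simp
  next
    case 2
    then have t: "root_val t \<in> set_tree glued"
      using framed_bst root_val_in_set_tree_glue[of mids t] by (simp add: glued_def)
    then have "glued \<noteq> Leaf"
      by auto
    have sub: "tedges glued \<subseteq> tedges frame" "set_tree glued \<subseteq> set_tree frame"
      using frame_subtrees(1-6) by blast+
    have "tdist frame (max_val high) (root_val t) \<le> 3 + tdist glued (root_val glued) (root_val t)"
      using tdist_frame_top(3)[OF \<open>glued \<noteq> Leaf\<close>]
      by (intro tdist_via_subtree[OF sub frame_subtrees(8) t \<open>glued \<noteq> Leaf\<close>]) simp
    moreover have "tdist glued (root_val glued) (root_val t) \<le> 2 * H"
      using tdist_glue_root[of mids H t] framed_bst assms(1) 2 by (simp add: glued_def)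
    ultimately show ?thesis
      using sub(2) t by auto
  qed (use tdist_frame_top_high in auto)
qed

lemma embeds_nearly_low_frame: "embeds_nearly low frame"
proof (cases "set_tree low = {root_val low}")
  case True
  then show ?thesis
    by (simp add: embeds_nearly_def)
next
  case False
  define f where "f u = (if u = root_val low then root_val inner else u)" for u
  have "inner \<noteq> Leaf \<and> (\<forall>(u, v)\<in>tedges low. (f u, f v) \<in> tedges inner \<or> f u = f v)"
    unfolding f_def inner_def by (rule tedges_without_min[OF framed_bst_low_high(1,2) False])
  then have hom: "inner \<noteq> Leaf" "\<forall>(u, v)\<in>tedges low. (f u, f v) \<in> tedges frame \<or> f u = f v"
    using frame_subtrees(3) by fast+
  have "tdist frame (root_val low) (f (root_val low)) \<le> 2" "f (root_val low) \<in> set_tree frame"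
    using tdist_frame_top(1)[OF hom(1)] tdist_frame_spine(1)
      tdist_triangle[OF frame_subtrees(7,8), of "root_val inner"] by (auto simp: f_def)
  with hom(2) show ?thesis
    using set_tree_frame by (intro embeds_nearly_if_displaced[where e = "root_val low" and f = f])
      (auto simp: f_def)
qed

lemma embeds_nearly_high_frame: "embeds_nearly high frame"
proof -
  define f where "f u = (if u = max_val high then root_val high else u)" for u
  have "\<forall>(u, v)\<in>tedges high. (f u, f v) \<in> tedges upper \<or> f u = f v"
    unfolding f_def upper_def by (rule tedges_without_max[OF framed_bst_low_high(3,4)])
  then have "\<forall>(u, v)\<in>tedges high. (f u, f v) \<in> tedges frame \<or> f u = f v"
    using frame_subtrees(2,3) by fast
  with tdist_frame_top_high show ?thesis
    using set_tree_frame by (intro embeds_nearly_if_displaced[where e = "max_val high" and f = f])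
      (auto simp: f_def)
qed

lemma embeds_nearly_frame:
  assumes "t \<in> set (low # mids @ [high])"
  shows "embeds_nearly t frame"
proof -
  have "tedges t \<subseteq> tedges frame" if "t \<in> set mids"
    using that tedges_glue[of mids t] framed_bst frame_subtrees(1-3) by (auto simp: glued_def)
  then show ?thesis
    using assms embeds_nearly_low_frame embeds_nearly_high_frame embeds_nearly_if_tedges_subset by auto
qed

lemma walk_cost_frame_tours:
  assumes "length mids \<le> 2 ^ H"
    and blocks: "\<forall>b\<in>set bs. T b \<in> set (low # mids @ [high]) \<and> distinct b \<and> b \<noteq> [] \<and> set b \<subseteq> set_tree (T b)"
  shows "walk_cost frame (root_val low # concat bs @ [root_val low])
    \<le> (\<Sum>b\<leftarrow>bs. walk_cost (T b) (root_val (T b) # b @ [root_val (T b)]) + 12) + (length bs + 1) * (6 + 4 * H)"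
proof -
  define S where "S = insert (root_val low) ((\<lambda>b. root_val (T b)) ` set bs)"
  have near_top: "x \<in> set_tree frame \<and> tdist frame (max_val high) x \<le> 3 + 2 * H" if "x \<in> S" for x
    using that blocks tdist_frame_top_root[OF assms(1)] by (auto simp: S_def)
  have "tdist frame x y \<le> 6 + 4 * H" if "x \<in> S" "y \<in> S" for x y
    using near_top[OF that(1)] near_top[OF that(2)] tdist_triangle[OF _ frame_subtrees(8), of x y]
      tdist_sym[of frame x] by simp
  moreover have "\<forall>b\<in>set bs. b \<noteq> [] \<and> set b \<subseteq> set_tree frame \<and> root_val (T b) \<in> set_tree frame"
    using blocks near_top set_tree_frame by (fastforce simp: S_def)
  ultimately have "walk_cost frame (root_val low # concat bs @ [root_val low])
      \<le> (\<Sum>b\<leftarrow>bs. walk_cost frame (root_val (T b) # b @ [root_val (T b)])) + (length bs + 1) * (6 + 4 * H)"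
    using frame_subtrees(7) by (intro walk_cost_concat_tours) (auto simp: S_def)
  also have "\<dots> \<le> (\<Sum>b\<leftarrow>bs. walk_cost (T b) (root_val (T b) # b @ [root_val (T b)]) + 12) + (length bs + 1) * (6 + 4 * H)"
  proof (intro add_right_mono sum_list_mono)
    fix b assume "b \<in> set bs"
    with blocks have "embeds_nearly (T b) frame" "framed (T b)" "distinct b" "set b \<subseteq> set_tree (T b)"
      using embeds_nearly_frame framed_bst by auto
    then show "walk_cost frame (root_val (T b) # b @ [root_val (T b)])
        \<le> walk_cost (T b) (root_val (T b) # b @ [root_val (T b)]) + 12"
      using root_val_in_set_tree[OF framed_not_Leaf] by (intro walk_cost_tour_embeds_nearly) auto
  qed
  finally show ?thesis .
qed

end

section \<open>Trees with cheap tours\<close>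

text \<open>The tour bound is \<open>2 K (length b - 1)\<close>, stated additively to avoid truncated subtraction.\<close>
definition tour_tree :: "nat \<Rightarrow> 'a::linorder list \<Rightarrow> 'a tree \<Rightarrow> bool" where
  "tour_tree K b t \<longleftrightarrow> bst t \<and> framed t \<and> set_tree t = set b \<and>
     walk_cost t (root_val t # b @ [root_val t]) + 2 * K \<le> 2 * K * length b"

lemma sorted_wrt_less_sets_sort_key_Min:
  fixes bs :: "'a::linorder list list"
  assumes "\<forall>b\<in>set bs. b \<noteq> []" "distinct bs"
    and "\<forall>b\<in>set bs. \<forall>b'\<in>set bs. b \<noteq> b' \<longrightarrow> less_sets (set b) (set b') \<or> less_sets (set b') (set b)"
  shows "sorted_wrt less_sets (map set (sort_key (\<lambda>b. Min (set b)) bs))"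
proof -
  define vs where "vs = sort_key (\<lambda>b. Min (set b)) bs"
  have vs: "set vs = set bs" "distinct vs" "sorted (map (\<lambda>b. Min (set b)) vs)"
    using assms(2) by (simp_all add: vs_def)
  have "less_sets (set (vs ! i)) (set (vs ! j))" if "i < j" "j < length vs" for i j
  proof -
    have "vs ! i \<in> set vs" "vs ! j \<in> set vs"
      using that by simp_all
    moreover have "vs ! i \<noteq> vs ! j"
      using that vs(2) by (simp add: nth_eq_iff_index_eq)
    ultimately have ij: "vs ! i \<in> set bs" "vs ! j \<in> set bs" "vs ! i \<noteq> vs ! j"
      using vs(1) by simp_all
    have "Min (set (vs ! i)) \<le> Min (set (vs ! j))"
      using sorted_nth_mono[OF vs(3), of i j] that by simp
    moreover have "\<not> less_sets (set (vs ! j)) (set (vs ! i))"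
    proof
      assume "less_sets (set (vs ! j)) (set (vs ! i))"
      moreover have "Min (set (vs ! j)) \<in> set (vs ! j)" "Min (set (vs ! i)) \<in> set (vs ! i)"
        using ij(1,2) assms(1) by simp_all
      ultimately have "Min (set (vs ! j)) < Min (set (vs ! i))"
        unfolding less_sets_def by blast
      with \<open>Min (set (vs ! i)) \<le> Min (set (vs ! j))\<close> show False
        by simp
    qed
    ultimately show ?thesis
      using assms(3) ij by blast
  qed
  then show ?thesis
    unfolding vs_def[symmetric] sorted_wrt_map sorted_wrt_iff_nth_less by simp
qed

lemma sum_list_le_length_concat:
  "\<forall>b\<in>set bs. f b + c \<le> a * length b + e \<Longrightarrow>
   sum_list (map f bs) + c * length bs \<le> a * length (concat bs) + e * length bs"
  by (induction bs) (auto simp: algebra_simps)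

lemma (in sorted_framed_trees) tour_tree_frame:
  fixes bs :: "'a list list" and H :: nat
  defines "K \<equiv> 24 + 6 * H"
  assumes len: "2 \<le> length bs" "length mids \<le> 2 ^ H"
    and trees: "T ` set bs = set (low # mids @ [high])" "\<forall>b\<in>set bs. distinct b \<and> tour_tree K b (T b)"
  shows "tour_tree K (concat bs) frame"
proof -
  have "set_tree frame = (\<Union>t\<in>T ` set bs. set_tree t)"
    unfolding trees(1) by (rule set_tree_frame)
  then have set: "set_tree frame = set (concat bs)"
    using trees(2) by (simp add: tour_tree_def)
  have "\<forall>b\<in>set bs. T b \<in> set (low # mids @ [high]) \<and> distinct b \<and> b \<noteq> [] \<and> set b \<subseteq> set_tree (T b)"
    using trees framed_not_Leaf by (fastforce simp: tour_tree_def)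
  then have "walk_cost frame (root_val low # concat bs @ [root_val low])
      \<le> (\<Sum>b\<leftarrow>bs. walk_cost (T b) (root_val (T b) # b @ [root_val (T b)]) + 12) + (length bs + 1) * (6 + 4 * H)"
    by (rule walk_cost_frame_tours[OF len(2)])
  moreover have "(\<Sum>b\<leftarrow>bs. walk_cost (T b) (root_val (T b) # b @ [root_val (T b)]) + 12) + 2 * K * length bs
      \<le> 2 * K * length (concat bs) + 12 * length bs"
    using trees(2) by (intro sum_list_le_length_concat) (auto simp: tour_tree_def)
  moreover have "12 * length bs + (length bs + 1) * (6 + 4 * H) + 2 * K \<le> 2 * K * length bs"
  proof -
    obtain i where "length bs = i + 2"
      using len(1) by (metis add.commute le_Suc_ex)
    then show ?thesis
      unfolding K_def by (simp add: algebra_simps)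
  qed
  ultimately have "walk_cost frame (root_val frame # concat bs @ [root_val frame]) + 2 * K
      \<le> 2 * K * length (concat bs)"
    unfolding frame_props(3) by linarith
  with set show ?thesis
    using frame_props(1,2) unfolding tour_tree_def by blast
qed

lemma tour_tree_concat:
  fixes bs :: "'a::linorder list list" and H :: nat
  defines "K \<equiv> 24 + 6 * H"
  assumes len: "2 \<le> length bs" "length bs \<le> 2 ^ H" and distinct: "distinct (concat bs)"
    and separated: "\<forall>b\<in>set bs. \<forall>b'\<in>set bs. b \<noteq> b' \<longrightarrow> less_sets (set b) (set b') \<or> less_sets (set b') (set b)"
    and trees: "\<forall>b\<in>set bs. tour_tree K b (T b)"
  shows "\<exists>t. tour_tree K (concat bs) t"
proof -
  have blocks: "\<forall>b\<in>set bs. b \<noteq> [] \<and> distinct b \<and> framed (T b) \<and> bst (T b) \<and> set_tree (T b) = set b"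
    using trees distinct framed_not_Leaf by (fastforce simp: tour_tree_def distinct_concat_iff)
  then have "removeAll [] bs = bs"
    by (intro removeAll_id) auto
  with distinct have "distinct bs"
    by (metis distinct_concat_iff)
  define vs where "vs = sort_key (\<lambda>b. Min (set b)) bs"
  have vs: "set vs = set bs" "length vs = length bs" "sorted_wrt less_sets (map set vs)"
    using sorted_wrt_less_sets_sort_key_Min[OF _ \<open>distinct bs\<close> separated] blocks by (simp_all add: vs_def)
  obtain low rest where "vs = low # rest"
    using len(1) vs(2) by (cases vs) auto
  moreover obtain mids high where "rest = mids @ [high]"
    using len(1) vs(2) \<open>vs = low # rest\<close> by (cases rest rule: rev_cases) auto
  ultimately have vs_split: "vs = low # mids @ [high]"
    by simp
  have "\<forall>t\<in>set (map T vs). framed t \<and> bst t" "map set_tree (map T vs) = map set vs"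
    using blocks vs(1) by auto
  with vs(3) have "\<forall>t\<in>set (T low # map T mids @ [T high]). framed t \<and> bst t"
    "sorted_wrt less_sets (map set_tree (T low # map T mids @ [T high]))"
    by (simp_all only: vs_split list.map map_append)
  then interpret sorted_framed_trees "T low" "T high" "map T mids"
    by unfold_locales
  have "tour_tree K (concat bs) frame"
    unfolding K_def
  proof (rule tour_tree_frame)
    show "length (map T mids) \<le> 2 ^ H" "T ` set bs = set (T low # map T mids @ [T high])"
      using len(2) vs(1,2) by (auto simp: vs_split)
  qed (use len(1) trees blocks in \<open>auto simp: K_def\<close>)
  then show ?thesis
    by blast
qed

section \<open>Decomposable sequences\<close>

lemma std_interval:
  assumes "set xs = {c..e}"
  shows "std xs = map (\<lambda>x. x + 1 - c) xs"
  unfolding std_def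
proof (rule map_cong[OF refl])
  fix x assume "x \<in> set xs"
  then have "{y \<in> set xs. y \<le> x} = {c..x}"
    using assms by auto
  then show "card {y \<in> set xs. y \<le> x} = x + 1 - c"
    by simp
qed

lemma interval_eq_map_std:
  assumes "set xs = {c..e}"
  shows "xs = map (\<lambda>y. y + c - 1) (std xs)"
proof -
  have "x + 1 - c + c - 1 = x" if "x \<in> set xs" for x
    using that assms by auto
  then show ?thesis
    by (simp add: std_interval[OF assms] map_idI)
qed

lemma strict_mono_on_std_interval:
  assumes "set xs = {c..e}" "set xs \<subseteq> A" "strict_mono_on A f"
  shows "strict_mono_on (set (std xs)) (\<lambda>y. f (y + c - 1))"
proof (rule strict_mono_onI)
  have shift: "y + c - 1 \<in> set xs \<and> 1 \<le> y" if "y \<in> set (std xs)" for y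
    using that assms(1) unfolding std_interval[OF assms(1)] by auto
  fix y z assume "y \<in> set (std xs)" "z \<in> set (std xs)" "y < z"
  with shift[of y] shift[of z] have "y + c - 1 < z + c - 1" "y + c - 1 \<in> A" "z + c - 1 \<in> A"
    using assms(2) by auto
  then show "f (y + c - 1) < f (z + c - 1)"
    using strict_mono_onD[OF assms(3)] by blast
qed

lemma less_sets_intervals:
  fixes c e c' e' :: "'a::linorder"
  assumes "c \<le> e" "c' \<le> e'" "{c..e} \<inter> {c'..e'} = {}"
  shows "less_sets {c..e} {c'..e'} \<or> less_sets {c'..e'} {c..e}"
proof (cases "c \<le> c'")
  case True
  have "e < c'"
  proof (rule ccontr)
    assume "\<not> e < c'"
    with True assms(2) have "c' \<in> {c..e} \<inter> {c'..e'}"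
      by auto
    with assms(3) show False
      by blast
  qed
  then show ?thesis
    unfolding less_sets_def by auto
next
  case False
  have "e' < c"
  proof (rule ccontr)
    assume "\<not> e' < c"
    with False assms(1) have "c \<in> {c..e} \<inter> {c'..e'}"
      by auto
    with assms(3) show False
      by blast
  qed
  then show ?thesis
    unfolding less_sets_def by auto
qed

lemma less_sets_image:
  "strict_mono_on S f \<Longrightarrow> A \<subseteq> S \<Longrightarrow> B \<subseteq> S \<Longrightarrow> less_sets A B \<Longrightarrow> less_sets (f ` A) (f ` B)"
  unfolding less_sets_def by (auto intro: strict_mono_onD)

lemma tour_tree_map_interval:
  fixes f :: "nat \<Rightarrow> 'a::linorder"
  assumes b: "set b = {c..e}" "distinct b" "set b \<subseteq> A" and mono: "strict_mono_on A f"
    and pattern: "\<forall>g :: nat \<Rightarrow> 'a. distinct (std b) \<longrightarrow> strict_mono_on (set (std b)) g \<longrightarrow>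
      (\<exists>t. tour_tree K (map g (std b)) t)"
  shows "\<exists>t. tour_tree K (map f b) t"
proof -
  have shift: "b = map (\<lambda>y. y + c - 1) (std b)"
    by (rule interval_eq_map_std[OF b(1)])
  have "distinct (map (\<lambda>y. y + c - 1) (std b))"
    using b(2) by (subst (asm) shift)
  then have "distinct (std b)"
    by (simp add: distinct_map)
  moreover have "strict_mono_on (set (std b)) (\<lambda>y. f (y + c - 1))"
    by (rule strict_mono_on_std_interval[OF b(1,3) mono])
  ultimately obtain t where "tour_tree K (map (\<lambda>y. f (y + c - 1)) (std b)) t"
    using pattern by (elim allE impE) auto
  moreover have "map f b = map f (map (\<lambda>y. y + c - 1) (std b))"
    using shift by (rule arg_cong)
  ultimately show ?thesis
    by (auto simp: comp_def)
qed

lemma less_sets_map_intervals: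
  fixes bs :: "'a::linorder list list" and f :: "'a \<Rightarrow> 'b::linorder"
  assumes "distinct (concat bs)" "\<forall>b\<in>set bs. \<exists>c e. c \<le> e \<and> set b = {c..e}"
    and mono: "strict_mono_on (set (concat bs)) f" and b: "b1 \<in> set bs" "b2 \<in> set bs" "b1 \<noteq> b2"
  shows "less_sets (set (map f b1)) (set (map f b2)) \<or> less_sets (set (map f b2)) (set (map f b1))"
proof -
  obtain c1 e1 where 1: "c1 \<le> e1" "set b1 = {c1..e1}"
    using assms(2) b(1) by blast
  obtain c2 e2 where 2: "c2 \<le> e2" "set b2 = {c2..e2}"
    using assms(2) b(2) by blast
  have "set b1 \<inter> set b2 = {}"
    using assms(1) b unfolding distinct_concat_iff by blast
  with 1 2 have "less_sets (set b1) (set b2) \<or> less_sets (set b2) (set b1)"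
    using less_sets_intervals[OF 1(1) 2(1)] by simp
  moreover have "set b1 \<subseteq> set (concat bs)" "set b2 \<subseteq> set (concat bs)"
    using b(1,2) by auto
  ultimately show ?thesis
    unfolding set_map using less_sets_image[OF mono] by blast
qed

lemma tour_tree_concat_intervals:
  fixes f :: "nat \<Rightarrow> 'a::linorder" and H :: nat
  defines "K \<equiv> 24 + 6 * H"
  assumes len: "2 \<le> length bs" "length bs \<le> 2 ^ H"
    and distinct: "distinct (concat bs)" and mono: "strict_mono_on (set (concat bs)) f"
    and interval: "\<forall>b\<in>set bs. \<exists>c e. c \<le> e \<and> set b = {c..e}"
    and pattern: "\<forall>b\<in>set bs. \<forall>g :: nat \<Rightarrow> 'a. distinct (std b) \<longrightarrow> strict_mono_on (set (std b)) g \<longrightarrow>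
      (\<exists>t. tour_tree K (map g (std b)) t)"
  shows "\<exists>t. tour_tree K (map f (concat bs)) t"
proof -
  have "\<exists>t. tour_tree K b' t" if b': "b' \<in> set (map (map f) bs)" for b'
  proof -
    obtain b where b: "b \<in> set bs" "b' = map f b"
      using b' by auto
    obtain c e where "set b = {c..e}"
      using interval b(1) by blast
    moreover have "distinct b" "set b \<subseteq> set (concat bs)"
      using b(1) distinct by (auto simp: distinct_concat_iff)
    ultimately show ?thesis
      unfolding b(2) by (rule tour_tree_map_interval[OF _ _ _ mono bspec[OF pattern b(1)]])
  qed
  then obtain T where "\<forall>b'\<in>set (map (map f) bs). tour_tree K b' (T b')"
    by (metis bchoice)
  moreover have "distinct (concat (map (map f) bs))"
    using distinct mono by (simp add: map_concat[symmetric] distinct_map strict_mono_on_imp_inj_on)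
  moreover have "less_sets (set b1') (set b2') \<or> less_sets (set b2') (set b1')"
    if b': "b1' \<in> set (map (map f) bs)" "b2' \<in> set (map (map f) bs)" "b1' \<noteq> b2'" for b1' b2'
  proof -
    obtain b1 b2 where b: "b1 \<in> set bs" "b2 \<in> set bs" "b1' = map f b1" "b2' = map f b2"
      using b'(1,2) by auto
    with b'(3) have "b1 \<noteq> b2"
      by auto
    from less_sets_map_intervals[OF distinct interval mono b(1,2) this] show ?thesis
      unfolding b(3,4) .
  qed
  ultimately have "\<exists>t. tour_tree K (concat (map (map f) bs)) t"
    using len unfolding K_def by (intro tour_tree_concat) auto
  then show ?thesis
    unfolding map_concat .
qed

lemma decomposable_tour_tree:
  fixes f :: "nat \<Rightarrow> 'a::linorder"
  assumes "decomposable d p" "d \<le> 2 ^ H" "distinct p" "strict_mono_on (set p) f"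
  shows "\<exists>t. tour_tree (24 + 6 * H) (map f p) t"
proof -
  have "\<forall>f :: nat \<Rightarrow> 'a. distinct p \<longrightarrow> strict_mono_on (set p) f \<longrightarrow>
      (\<exists>t. tour_tree (24 + 6 * H) (map f p) t)"
    using assms(1)
  proof (induction rule: decomposable.induct)
    case single
    have "tour_tree (24 + 6 * H) [f 1] \<langle>\<langle>\<rangle>, f 1, \<langle>\<rangle>\<rangle>" for f :: "nat \<Rightarrow> 'a"
      by (simp add: tour_tree_def framed_def)
    then show ?case
      by auto
  next
    case (split bs p)
    have "\<forall>b\<in>set bs. \<exists>c e. c \<le> e \<and> set b = {c..e}"
      using split.IH by (auto simp: is_value_interval_def)
    moreover have "\<forall>b\<in>set bs. \<forall>g :: nat \<Rightarrow> 'a. distinct (std b) \<longrightarrow> strict_mono_on (set (std b)) g \<longrightarrow>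
        (\<exists>t. tour_tree (24 + 6 * H) (map g (std b)) t)"
      using split.IH by blast
    ultimately show ?case
      using split.hyps assms(2) tour_tree_concat_intervals[of bs H] by auto
  qed
  with assms(3,4) show ?thesis
    by blast
qed

lemma F1_le_tour_tree:
  assumes "is_perm X" "tour_tree K X t"
  shows "F1 X \<le> (2 * K + 1) * length X"
proof -
  have t: "bst t" "framed t" "set_tree t = {1..length X}"
    and tour: "walk_cost t (root_val t # X @ [root_val t]) + 2 * K \<le> 2 * K * length X"
    using assms by (auto simp: tour_tree_def is_perm_def)
  have "root_val t \<in> set_tree t"
    using root_val_in_set_tree[OF framed_not_Leaf[OF t(2)]] .
  with t have "finger_cost t (root_val t) X
      \<in> {finger_cost t l X | t l. bst t \<and> set_tree t = {1..length X} \<and> l \<in> set_tree t}"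
    by blast
  then have "F1 X \<le> finger_cost t (root_val t) X"
    unfolding F1_def Inf_nat_def by (rule Least_le)
  also have "\<dots> = length X + walk_cost t (root_val t # X)"
    by (rule finger_cost_eq_walk_cost)
  also have "walk_cost t (root_val t # X) \<le> walk_cost t ((root_val t # X) @ [root_val t])"
    by (rule walk_cost_prefix_le)
  finally show ?thesis
    using tour by simp
qed

theorem theorem5:
  shows "\<exists>c::real. c > 0 \<and> (\<forall>(d::nat) (X::nat list). 2 \<le> d \<longrightarrow> is_perm X \<longrightarrow> decomposable d X \<longrightarrow>
           real (F1 X) \<le> c * logp (real d) * real (length X))"
proof (intro exI[of _ 73] conjI allI impI)
  fix d :: nat and X :: "nat list"
  assume d: "2 \<le> d" and perm: "is_perm X" and "decomposable d X"
  define H where "H = ceillog2 d"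
  have "strict_mono_on (set X) id" "distinct X"
    using perm by (auto simp: is_perm_def strict_mono_on_def)
  then obtain t where "tour_tree (24 + 6 * H) X t"
    using decomposable_tour_tree[OF \<open>decomposable d X\<close> le_two_power_ceillog2, of id] by (auto simp: H_def)
  from F1_le_tour_tree[OF perm this] have "F1 X \<le> (49 + 12 * H) * length X"
    by simp
  then have "real (F1 X) \<le> real ((49 + 12 * H) * length X)"
    by (rule of_nat_mono)
  also have "\<dots> = (49 + 12 * real H) * real (length X)"
    by simp
  also have "\<dots> \<le> 73 * logp (real d) * real (length X)"
  proof (rule mult_right_mono)
    have "1 \<le> log 2 (real d)" "real H < log 2 (real d) + 1"
      using d ceillog2_less_log[of d] by (auto simp: H_def)
    moreover have "logp (real d) = log 2 (real d)"
      using d by (simp add: logp_def max_def)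
    ultimately show "49 + 12 * real H \<le> 73 * logp (real d)"
      by linarith
  qed simp
  finally show "real (F1 X) \<le> 73 * logp (real d) * real (length X)" .
qed simp

end
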